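(* Consider the flat FLRW spacetime $M=I\times\mathbb{R}^3$ ($I\subset\mathbb{R}$ an open interval), $g=-(\mathrm{d}x^0)^2+a(x^0)^2\delta_{ij}\mathrm{d}x^i\mathrm{d}x^j$ with smooth $a>0$, and $m,\sigma>0$. In global bundle coordinates $(x^0,x^i,v^i)$ on $U^mM$ (with $v^0=\sqrt{m^2+a^2|v|^2}$, $|v|=\sqrt{\delta_{ij}v^iv^j}$), a smooth function $f$ on $U^mM$ is invariant under the complete lifts of all Killing fields $\partial_{x^i}$ and $x^i\partial_{x^j}-x^j\partial_{x^i}$ (i.e. annihilated by $\partial_{x^i}$ and by $x^i\partial_{x^j}-x^j\partial_{x^i}+v^i\partial_{v^j}-v^j\partial_{v^i}$) if and only if $f(x^0,x,v)=F(x^0,p)$ for some function $F$, where $p=a(x^0)^2|v|$. For such $f$, the Fokker–Planck equation $\big(L_m-\frac{\sigma^2}{2}\Delta^{\mathrm{ver}}_m\big)f=0$ is equivalent (for $p>0$) to \[ \frac{\sqrt{m^2a^2+p^2}}{a}\,\frac{\partial F}{\partial x^0}=\frac{\sigma^2}{2}\Big(\Big(a^2+\frac{p^2}{m^2}\Big)\frac{\partial^2F}{\partial p^2}+\Big(\frac{2a^2}{p}+\frac{3p}{m^2}\Big)\frac{\partial F}{\partial p}\Big), \] and if $F$ is such a solution with enough decay in $p$ (so that the integrals converge, may be differentiated under the integral sign, and integration by parts produces no boundary terms), then the particle current density has $\mathsf J^i=0$ and \[ a(x^0)^3\,\mathsf J^0(x^0)=4\pi\int_0^\infty p^2F(x^0,p)\,\mathrm{d}p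 \] is independent of $x^0$.
   Context: On $U^mM=\{v\in TM:g(v,v)=-m^2,\ v\text{ future-directed}\}$ for this metric, with coordinates $(x^0,x^i,v^i)$, $i=1,2,3$: the geodesic spray is $L_m=v^0\big(\partial_{x^0}-2\frac{a'}{a}v^i\partial_{v^i}\big)+v^i\partial_{x^i}$ and the vertical Laplacian (fibrewise Laplace–Beltrami operator of the hyperboloids $U^m_xM$ with the metric induced by $g_x$) is $\Delta^{\mathrm{ver}}_m=\big(\frac{\delta^{ij}}{a^2}+\frac{v^iv^j}{m^2}\big)\partial_{v^i}\partial_{v^j}+\frac{3v^i}{m^2}\partial_{v^i}$. The fibre volume form is $\sigma^m_x=m\frac{a^3}{v^0}\mathrm{d}v^1\wedge\mathrm{d}v^2\wedge\mathrm{d}v^3$, and the particle current density is $\mathsf J^\mu(x)=m^{-1}\int_{U^m_xM}v^\mu f\,\sigma^m_x$, so that $\mathsf J^0=a^3\int_{\mathbb{R}^3}f\,\mathrm{d}^3v$. *)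

theory Defs
  imports "HOL-Analysis.Analysis"
begin

text \<open>Points of the unit-mass shell bundle in global coordinates (x0, x, v),
  x0 real, x and v in R^3.\<close>
type_synonym pt = "real \<times> (real^3) \<times> (real^3)"

definition dirD :: "('a::real_normed_vector \<Rightarrow> real) \<Rightarrow> 'a \<Rightarrow> 'a \<Rightarrow> real" where
  "dirD g z e = deriv (\<lambda>s. g (z + s *\<^sub>R e)) 0"

fun Ck :: "nat \<Rightarrow> 'a::euclidean_space set \<Rightarrow> ('a \<Rightarrow> real) \<Rightarrow> bool" where
  "Ck 0 S g = continuous_on S g"
| "Ck (Suc k) S g = ((\<forall>z\<in>S. g differentiable (at z)) \<and> (\<forall>e\<in>Basis. Ck k S (\<lambda>z. dirD g z e)))"

definition Cinf_on :: "'a::euclidean_space set \<Rightarrow> ('a \<Rightarrow> real) \<Rightarrow> bool" where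
  "Cinf_on S g = (\<forall>k. Ck k S g)"

definition e_t :: pt where "e_t = (1, 0, 0)"
definition e_x :: "3 \<Rightarrow> pt" where "e_x i = (0, axis i 1, 0)"
definition e_v :: "3 \<Rightarrow> pt" where "e_v i = (0, 0, axis i 1)"

definition UmM :: "real set \<Rightarrow> pt set" where
  "UmM I = {z. fst z \<in> I}"

definition vzero :: "(real \<Rightarrow> real) \<Rightarrow> real \<Rightarrow> real \<Rightarrow> real^3 \<Rightarrow> real" where
  "vzero a m t v = sqrt (m^2 + (a t)^2 * (norm v)^2)"

definition pmom :: "(real \<Rightarrow> real) \<Rightarrow> real \<Rightarrow> real^3 \<Rightarrow> real" where
  "pmom a t v = (a t)^2 * norm v"

definition invariant :: "real set \<Rightarrow> (pt \<Rightarrow> real) \<Rightarrow> bool" where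
  "invariant I f = (\<forall>z\<in>UmM I.
      (\<forall>i. dirD f z (e_x i) = 0) \<and>
      (\<forall>i j. (fst (snd z))$i * dirD f z (e_x j) - (fst (snd z))$j * dirD f z (e_x i)
             + (snd (snd z))$i * dirD f z (e_v j) - (snd (snd z))$j * dirD f z (e_v i) = 0))"

definition spray :: "(real \<Rightarrow> real) \<Rightarrow> real \<Rightarrow> (pt \<Rightarrow> real) \<Rightarrow> pt \<Rightarrow> real" where
  "spray a m f z = (let t = fst z; v = snd (snd z) in
     vzero a m t v * (dirD f z e_t - 2 * (deriv a t / a t) * (\<Sum>i\<in>UNIV. v$i * dirD f z (e_v i)))
     + (\<Sum>i\<in>UNIV. v$i * dirD f z (e_x i)))"

definition vlap :: "(real \<Rightarrow> real) \<Rightarrow> real \<Rightarrow> (pt \<Rightarrow> real) \<Rightarrow> pt \<Rightarrow> real" where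
  "vlap a m f z = (let t = fst z; v = snd (snd z) in
     (\<Sum>i\<in>UNIV. \<Sum>j\<in>UNIV. ((if i = j then 1 else 0) / (a t)^2 + v$i * v$j / m^2)
          * dirD (\<lambda>w. dirD f w (e_v j)) z (e_v i))
     + (\<Sum>i\<in>UNIV. 3 * v$i / m^2 * dirD f z (e_v i)))"

definition FP :: "(real \<Rightarrow> real) \<Rightarrow> real \<Rightarrow> real \<Rightarrow> (pt \<Rightarrow> real) \<Rightarrow> pt \<Rightarrow> real" where
  "FP a m \<sigma> f z = spray a m f z - \<sigma>^2 / 2 * vlap a m f z"

definition dt :: "(real \<Rightarrow> real \<Rightarrow> real) \<Rightarrow> real \<Rightarrow> real \<Rightarrow> real" where
  "dt F t p = deriv (\<lambda>s. F s p) t"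
definition dp :: "(real \<Rightarrow> real \<Rightarrow> real) \<Rightarrow> real \<Rightarrow> real \<Rightarrow> real" where
  "dp F t p = deriv (\<lambda>q. F t q) p"
definition dpp :: "(real \<Rightarrow> real \<Rightarrow> real) \<Rightarrow> real \<Rightarrow> real \<Rightarrow> real" where
  "dpp F t p = deriv (\<lambda>q. dp F t q) p"

definition FPred :: "(real \<Rightarrow> real) \<Rightarrow> real \<Rightarrow> real \<Rightarrow> (real \<Rightarrow> real \<Rightarrow> real) \<Rightarrow> real \<Rightarrow> real \<Rightarrow> bool" where
  "FPred a m \<sigma> F t p \<longleftrightarrow>
     sqrt (m^2 * (a t)^2 + p^2) / a t * dt F t p
     = \<sigma>^2 / 2 * (((a t)^2 + p^2 / m^2) * dpp F t p + (2 * (a t)^2 / p + 3 * p / m^2) * dp F t p)"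

text \<open>Particle current density J^mu(x) = m^-1 int v^mu f sigma^m_x,
  sigma^m_x = m a^3 / v^0 d^3v.  Spatial components and time component.\<close>
definition Jsp :: "(real \<Rightarrow> real) \<Rightarrow> real \<Rightarrow> (pt \<Rightarrow> real) \<Rightarrow> 3 \<Rightarrow> real \<Rightarrow> real^3 \<Rightarrow> real" where
  "Jsp a m f i t x = (1 / m) * integral\<^sup>L lborel
      (\<lambda>v::real^3. v$i * f (t, x, v) * (m * (a t)^3 / vzero a m t v))"

definition J0 :: "(real \<Rightarrow> real) \<Rightarrow> real \<Rightarrow> (pt \<Rightarrow> real) \<Rightarrow> real \<Rightarrow> real^3 \<Rightarrow> real" where
  "J0 a m f t x = (1 / m) * integral\<^sup>L lborel
      (\<lambda>v::real^3. vzero a m t v * f (t, x, v) * (m * (a t)^3 / vzero a m t v))"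

end

theory Submission
  imports Defs
begin

text \<open>
  Invariance under the translations removes the dependence on x, and integrating the
  rotational invariance along the flow of each plane rotation of v shows that f depends only
  on x0 and |v|, i.e. on x0 and p = a^2 |v|. For such f the Fokker--Planck operator is computed
  by the chain rule from the derivatives of the profile q \<mapsto> f(x0, 0, q e1), which gives
  the reduced equation. Multiplied by a p^2 / sqrt(m^2 a^2 + p^2), the reduced equation becomes
  the conservation law \<partial>_x0 (p^2 F) = \<partial>_p \<Phi> with flux
  \<Phi> = \<sigma>^2 a / (2 m^2) p^2 sqrt(m^2 a^2 + p^2) \<partial>_p F, which vanishes at p = 0 and, by
  hypothesis, at p = \<infinity>; differentiating under the integral sign shows that the integral
  of p^2 F over p > 0 is constant. The spatial current vanishes because its integrand is odd
  in v, and J0 is computed in polar coordinates followed by the substitution p = a^2 r.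
\<close>

section \<open>Directional derivatives in bundle coordinates\<close>

lemma e_t_Basis: "e_t \<in> Basis"
  and e_v_Basis: "e_v i \<in> Basis"
  by (force simp: e_t_def e_v_def Basis_prod_def zero_prod_def Basis_vec_def)+

lemma Cinf_on_dirD: "Cinf_on S g \<Longrightarrow> e \<in> Basis \<Longrightarrow> Cinf_on S (\<lambda>z. dirD g z e)"
  unfolding Cinf_on_def by (metis Ck.simps(2))

lemma Cinf_on_differentiable: "Cinf_on S g \<Longrightarrow> z \<in> S \<Longrightarrow> g differentiable (at z)"
  unfolding Cinf_on_def by (metis Ck.simps(2) One_nat_def)

lemma Cinf_on_continuous_on: "Cinf_on S g \<Longrightarrow> continuous_on S g"
  unfolding Cinf_on_def by (metis Ck.simps(1))

lemma dirD_eq_derivative: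
  assumes "(g has_derivative g') (at z)"
  shows "dirD g z e = g' e"
proof -
  have "((\<lambda>s. z + s *\<^sub>R e) has_derivative (\<lambda>s. s *\<^sub>R e)) (at 0)"
    by (auto intro!: derivative_eq_intros)
  with assms have "((\<lambda>s. g (z + s *\<^sub>R e)) has_derivative (\<lambda>s. g' (s *\<^sub>R e))) (at 0)"
    using has_derivative_compose[of "\<lambda>s. z + s *\<^sub>R e" _ 0 UNIV g g'] by simp
  moreover have "g' (s *\<^sub>R e) = g' e * s" for s
    using assms has_derivative_linear linear_scale by fastforce
  ultimately have "((\<lambda>s. g (z + s *\<^sub>R e)) has_real_derivative g' e) (at 0)"
    by (simp add: has_field_derivative_def)
  thus ?thesis unfolding dirD_def by (rule DERIV_imp_deriv)
qed

lemma dirD_chain: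
  assumes "\<psi> differentiable (at (\<gamma> s))" and "(\<gamma> has_vector_derivative d) (at s)"
  shows "((\<lambda>s. \<psi> (\<gamma> s)) has_real_derivative dirD \<psi> (\<gamma> s) d) (at s)"
proof -
  obtain L where L: "(\<psi> has_derivative L) (at (\<gamma> s))"
    using assms(1) differentiable_def by blast
  have "((\<lambda>s. \<psi> (\<gamma> s)) has_vector_derivative L d) (at s)"
    using vector_derivative_diff_chain_within[OF assms(2) has_derivative_at_withinI[OF L]]
    by (simp add: o_def)
  thus ?thesis
    by (simp add: dirD_eq_derivative[OF L] has_real_derivative_iff_has_vector_derivative)
qed

lemma pt_coordinate_expansion:
  "(d::pt) = fst d *\<^sub>R e_t + (\<Sum>i\<in>UNIV. fst (snd d) $ i *\<^sub>R e_x i)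
                         + (\<Sum>i\<in>UNIV. snd (snd d) $ i *\<^sub>R e_v i)"
proof -
  have vec: "(x::real^3) = x$1 *\<^sub>R axis 1 1 + x$2 *\<^sub>R axis 2 1 + x$3 *\<^sub>R axis 3 1" for x
    by (simp add: vec_eq_iff forall_3 axis_def)
  obtain t x v where "d = (t, x, v)" by (cases d) auto
  thus ?thesis
    unfolding e_t_def e_x_def e_v_def sum_3 by (simp add: prod_eq_iff) (metis vec add.assoc)
qed

lemma dirD_coordinate_expansion:
  assumes "\<psi> differentiable (at z)"
  shows "dirD \<psi> z d = fst d * dirD \<psi> z e_t + (\<Sum>i\<in>UNIV. fst (snd d) $ i * dirD \<psi> z (e_x i))
                                           + (\<Sum>i\<in>UNIV. snd (snd d) $ i * dirD \<psi> z (e_v i))"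
proof -
  obtain L where L: "(\<psi> has_derivative L) (at z)"
    using assms differentiable_def by blast
  have "linear L" using L has_derivative_linear by blast
  thus ?thesis
    unfolding dirD_eq_derivative[OF L]
    by (subst pt_coordinate_expansion) (simp add: linear_add linear_scale linear_sum)
qed

section \<open>Analysis on euclidean spaces\<close>

lemma has_real_derivative_norm_line:
  fixes v u :: "'a::real_inner"
  assumes "v \<noteq> 0"
  shows "((\<lambda>s. norm (v + s *\<^sub>R u)) has_real_derivative (u \<bullet> v / norm v)) (at 0)"
proof -
  have line: "((\<lambda>s. v + s *\<^sub>R u) has_derivative (\<lambda>s. s *\<^sub>R u)) (at 0)"
    by (auto intro!: derivative_eq_intros)
  have "(norm has_derivative (\<lambda>h. h \<bullet> sgn v)) (at (v + 0 *\<^sub>R u))"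
    using has_derivative_norm[OF assms] by simp
  from has_derivative_compose[OF line this]
  have "((\<lambda>s. norm (v + s *\<^sub>R u)) has_derivative (\<lambda>s. (s *\<^sub>R u) \<bullet> sgn v)) (at 0)"
    by simp
  moreover have "(\<lambda>s. (s *\<^sub>R u) \<bullet> sgn v) = (*) (u \<bullet> v / norm v)"
    by (auto simp: sgn_div_norm divide_inverse mult_ac)
  ultimately show ?thesis by (simp add: has_field_derivative_def)
qed

lemma lborel_integral_odd_eq_0:
  fixes \<phi> :: "'a::euclidean_space \<Rightarrow> real"
  assumes [measurable]: "\<phi> \<in> borel_measurable borel" and odd: "\<And>x. \<phi> (- x) = - \<phi> x"
  shows "integral\<^sup>L lborel \<phi> = 0"
proof -
  have "(lborel :: 'a measure) = density (distr lborel borel (\<lambda>x. 0 + (-1) *\<^sub>R x)) (\<lambda>_. \<bar>-1::real\<bar> ^ DIM('a))"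
    by (rule lborel_affine) simp
  hence reflect: "distr lborel borel uminus = (lborel :: 'a measure)"
    by (simp add: density_1)
  have "integral\<^sup>L lborel \<phi> = (\<integral>x. \<phi> x \<partial>distr lborel borel uminus)"
    by (simp add: reflect)
  also have "\<dots> = (\<integral>x. \<phi> (- x) \<partial>lborel)"
    by (rule integral_distr) auto
  also have "\<dots> = - integral\<^sup>L lborel \<phi>"
    by (simp add: odd)
  finally show ?thesis by simp
qed

text \<open>Surface area of the sphere of radius r in \<real>^n, extended by zero to r < 0.\<close>

definition radial_volume_density :: "nat \<Rightarrow> real \<Rightarrow> real" where
  "radial_volume_density n r = indicator {0..} r * (n * unit_ball_vol n * r ^ (n - 1))"

lemma radial_volume_density_measurable [measurable]:
  "radial_volume_density n \<in> borel_measurable borel"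
  unfolding radial_volume_density_def by measurable

lemma radial_volume_density_nonneg: "radial_volume_density n r \<ge> 0"
  by (auto simp: radial_volume_density_def indicator_def)

lemma emeasure_density_radial_volume_lessThan:
  assumes "n > 0"
  shows "emeasure (density lborel (radial_volume_density n)) {..<x}
           = ennreal (unit_ball_vol n * (max 0 x) ^ n)"
proof -
  have "emeasure (density lborel (radial_volume_density n)) {..<x}
      = (\<integral>\<^sup>+ r. ennreal (radial_volume_density n r) * indicator {..<x} r \<partial>lborel)"
    by (rule emeasure_density) (auto simp: radial_volume_density_def)
  also have "\<dots> = (\<integral>\<^sup>+ r. ennreal (n * unit_ball_vol n * r ^ (n - 1)) * indicator {0..max 0 x} r \<partial>lborel)"
    using AE_lborel_singleton[of "max 0 x"]
    by (intro nn_integral_cong_AE) (auto simp: radial_volume_density_def indicator_def)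
  also have "\<dots> = ennreal (unit_ball_vol n * (max 0 x) ^ n - unit_ball_vol n * 0 ^ n)"
  proof (rule nn_integral_has_integral_lebesgue')
    show "((\<lambda>r. n * unit_ball_vol n * r ^ (n - 1)) has_integral
            (unit_ball_vol n * (max 0 x) ^ n - unit_ball_vol n * 0 ^ n)) {0..max 0 x}"
      using assms
      by (intro fundamental_theorem_of_calculus)
         (auto intro!: derivative_eq_intros simp: has_real_derivative_iff_has_vector_derivative[symmetric])
  qed (use assms in auto)
  finally show ?thesis using assms by simp
qed

lemma emeasure_distr_norm_lborel_lessThan:
  "emeasure (distr (lborel :: 'a::euclidean_space measure) borel norm) {..<x}
     = ennreal (unit_ball_vol DIM('a) * (max 0 x) ^ DIM('a))"
proof (cases "x \<ge> 0")
  case True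
  thus ?thesis
    using emeasure_ball[OF True, of "0::'a"] by (subst emeasure_distr) (auto simp: ball_def vimage_def)
next
  case False
  hence "norm -` {..<x} = ({} :: 'a set)"
    by (auto simp: vimage_def) (smt (verit) norm_ge_zero)
  thus ?thesis
    using False by (subst emeasure_distr) auto
qed

lemma distr_norm_lborel:
  "distr (lborel :: 'a::euclidean_space measure) borel norm
     = density lborel (radial_volume_density DIM('a))"
proof (rule measure_eqI_generator_eq_countable[where \<Omega>=UNIV and E="range lessThan"
      and A="range (\<lambda>n::nat. {..< real n})"])
  show "emeasure (distr (lborel :: 'a measure) borel norm) X
      = emeasure (density lborel (radial_volume_density DIM('a))) X" if "X \<in> range lessThan" for X
    using that by (auto simp: emeasure_distr_norm_lborel_lessThan emeasure_density_radial_volume_lessThan)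
  show "emeasure (distr (lborel :: 'a measure) borel norm) X \<noteq> \<infinity>"
    if "X \<in> range (\<lambda>n::nat. {..< real n})" for X
    using that by (auto simp: emeasure_distr_norm_lborel_lessThan)
qed (auto simp: Int_stable_def borel_Iio intro: range_eqI[of _ _ "min _ _"] reals_Archimedean2)

lemma lborel_integral_radial:
  fixes H :: "real \<Rightarrow> real"
  assumes [measurable]: "H \<in> borel_measurable borel"
  shows "(\<integral>v. H (norm v) \<partial>(lborel :: 'a::euclidean_space measure))
           = (\<integral>r. radial_volume_density DIM('a) r * H r \<partial>lborel)"
proof -
  have "(\<integral>v. H (norm v) \<partial>(lborel :: 'a measure)) = (\<integral>r. H r \<partial>distr (lborel :: 'a measure) borel norm)"
    by (rule integral_distr[symmetric]) auto
  also have "\<dots> = (\<integral>r. radial_volume_density DIM('a) r * H r \<partial>lborel)"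
    unfolding distr_norm_lborel
    by (subst integral_density) (auto simp: radial_volume_density_nonneg)
  finally show ?thesis .
qed

lemma abs_difference_quotient_le:
  fixes f f' :: "real \<Rightarrow> real"
  assumes "convex S" "x \<in> S" "x + h \<in> S"
    and "\<And>y. y \<in> S \<Longrightarrow> (f has_real_derivative f' y) (at y)" "\<And>y. y \<in> S \<Longrightarrow> \<bar>f' y\<bar> \<le> B"
  shows "\<bar>(f (x + h) - f x) / h\<bar> \<le> B"
proof (cases "h = 0")
  case False
  have "norm (f (x + h) - f x) \<le> B * norm (x + h - x)"
    by (rule field_differentiable_bound[OF assms(1) _ _ assms(3,2)])
       (use assms(4,5) in \<open>auto simp: has_field_derivative_at_within\<close>)
  with False show ?thesis by (simp add: divide_le_eq abs_divide)
qed (use assms(2,5) in force)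

lemma has_real_derivative_integral_dominated:
  fixes G G' :: "real \<Rightarrow> 'a \<Rightarrow> real"
  assumes S: "open S" "convex S" "t \<in> S"
    and G_int: "\<And>\<tau>. \<tau> \<in> S \<Longrightarrow> integrable M (G \<tau>)"
    and G_deriv: "\<And>\<tau> x. \<tau> \<in> S \<Longrightarrow> x \<in> space M \<Longrightarrow> ((\<lambda>\<tau>. G \<tau> x) has_real_derivative G' \<tau> x) (at \<tau>)"
    and g_int: "integrable M g"
    and g_bound: "\<And>\<tau> x. \<tau> \<in> S \<Longrightarrow> x \<in> space M \<Longrightarrow> \<bar>G' \<tau> x\<bar> \<le> g x"
  shows "((\<lambda>\<tau>. \<integral>x. G \<tau> x \<partial>M) has_real_derivative (\<integral>x. G' t x \<partial>M)) (at t)"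
proof -
  obtain \<delta> where \<delta>: "\<delta> > 0" "ball t \<delta> \<subseteq> S"
    using S openE by blast
  have "((\<lambda>h. ((\<integral>x. G (t + h) x \<partial>M) - (\<integral>x. G t x \<partial>M)) / h) \<longlongrightarrow> (\<integral>x. G' t x \<partial>M))
          (at 0 within ball 0 \<delta>)"
  proof (subst tendsto_at_iff_sequentially, intro allI impI)
    fix X :: "nat \<Rightarrow> real" assume X: "\<forall>i. X i \<in> ball 0 \<delta> - {0}" and "X \<longlonglongrightarrow> 0"
    define s where "s i x = (G (t + X i) x - G t x) / X i" for i x
    have tX: "t + X i \<in> S" for i
      using X \<delta>(2) by (auto simp: dist_norm)
    have s_lim: "(\<lambda>i. s i x) \<longlonglongrightarrow> G' t x" if "x \<in> space M" for x
    proof -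
      have "((\<lambda>h. (G (t + h) x - G t x) / h) \<longlongrightarrow> G' t x) (at 0)"
        using G_deriv[OF S(3) that] by (simp add: DERIV_def)
      with X \<open>X \<longlonglongrightarrow> 0\<close> show ?thesis
        unfolding s_def tendsto_at_iff_sequentially by (auto simp: o_def)
    qed
    have s_meas: "s i \<in> borel_measurable M" for i
      unfolding s_def[abs_def] using G_int[OF tX] G_int[OF S(3)] by measurable
    have s_bound: "norm (s i x) \<le> g x" if x: "x \<in> space M" for i x
      unfolding s_def real_norm_def
      by (rule abs_difference_quotient_le[OF S(2,3) tX]) (use G_deriv[OF _ x] g_bound[OF _ x] in auto)
    have "G' t \<in> borel_measurable M"
      by (rule borel_measurable_LIMSEQ_real[OF s_lim s_meas])
    hence "(\<lambda>i. integral\<^sup>L M (s i)) \<longlonglongrightarrow> (\<integral>x. G' t x \<partial>M)"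
      by (rule integral_dominated_convergence[OF _ s_meas g_int]) (use s_lim s_bound in \<open>auto intro!: AE_I2\<close>)
    moreover have "integral\<^sup>L M (s i) = ((\<integral>x. G (t + X i) x \<partial>M) - (\<integral>x. G t x \<partial>M)) / X i" for i
      unfolding s_def using G_int[OF tX] G_int[OF S(3)] by simp
    ultimately show "((\<lambda>h. ((\<integral>x. G (t + h) x \<partial>M) - (\<integral>x. G t x \<partial>M)) / h) \<circ> X)
                       \<longlonglongrightarrow> (\<integral>x. G' t x \<partial>M)"
      by (simp add: o_def)
  qed
  moreover have "at (0::real) within ball 0 \<delta> = at 0"
    by (rule at_within_open) (use \<delta> in auto)
  ultimately show ?thesis by (simp add: DERIV_def)
qed

lemma set_integral_Ioi_FTC:
  fixes \<phi> \<Phi> :: "real \<Rightarrow> real"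
  assumes deriv: "\<And>x. x > a \<Longrightarrow> (\<Phi> has_real_derivative \<phi> x) (at x)"
    and cont: "\<And>x. x > a \<Longrightarrow> isCont \<phi> x"
    and int: "set_integrable lborel {a<..} \<phi>"
    and lim_a: "(\<Phi> \<longlongrightarrow> A) (at_right a)" and lim_top: "(\<Phi> \<longlongrightarrow> B) at_top"
  shows "set_lebesgue_integral lborel {a<..} \<phi> = B - A"
proof -
  have "(LBINT x=ereal a..\<infinity>. \<phi> x) = B - A"
  proof (rule interval_integral_FTC_integrable[where F=\<Phi>])
    show "(\<Phi> has_vector_derivative \<phi> x) (at x)" if "ereal a < ereal x" for x
      using deriv that by (simp add: has_real_derivative_iff_has_vector_derivative)
    show "isCont \<phi> x" if "ereal a < ereal x" for x
      using cont that by simp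
    show "set_integrable lborel (einterval (ereal a) \<infinity>) \<phi>"
      using int by (simp add: einterval_eq_Ici)
    show "((\<Phi> \<circ> real_of_ereal) \<longlongrightarrow> A) (at_right (ereal a))"
      using lim_a by (simp add: ereal_tendsto_simps1)
    show "((\<Phi> \<circ> real_of_ereal) \<longlongrightarrow> B) (at_left \<infinity>)"
      using lim_top by (simp add: ereal_tendsto_simps1)
  qed simp
  thus ?thesis by (simp add: interval_lebesgue_integral_def einterval_eq_Ici)
qed

section \<open>Invariant functions are radial\<close>

definition radial_on :: "real set \<Rightarrow> (pt \<Rightarrow> real) \<Rightarrow> bool" where
  "radial_on I f \<longleftrightarrow> (\<forall>t\<in>I. \<forall>x v. f (t, x, v) = f (t, 0, norm v *\<^sub>R axis 1 1))"

definition plane_rotation :: "3 \<Rightarrow> 3 \<Rightarrow> real \<Rightarrow> real^3 \<Rightarrow> real^3" where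
  "plane_rotation i j \<theta> v = (\<chi> k. if k = i then cos \<theta> * v$i - sin \<theta> * v$j
                                else if k = j then sin \<theta> * v$i + cos \<theta> * v$j else v$k)"

lemma plane_rotation_0 [simp]: "plane_rotation i j 0 v = v"
  by (simp add: plane_rotation_def vec_eq_iff)

lemma plane_rotation_has_vector_derivative:
  assumes "i \<noteq> j"
  shows "((\<lambda>\<theta>. plane_rotation i j \<theta> v) has_vector_derivative
           (\<chi> k. if k = i then - plane_rotation i j \<theta> v $ j
                 else if k = j then plane_rotation i j \<theta> v $ i else 0)) (at \<theta>)"
proof -
  define P where "P = (\<chi> k. if k = i then v$i else if k = j then v$j else (0::real))"
  define Q where "Q = (\<chi> k. if k = i then - v$j else if k = j then v$i else (0::real))"
  have "(\<lambda>\<theta>. plane_rotation i j \<theta> v) =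
          (\<lambda>\<theta>. cos \<theta> *\<^sub>R P + sin \<theta> *\<^sub>R Q + (\<chi> k. if k = i \<or> k = j then 0 else v$k))"
    by (auto simp: plane_rotation_def P_def Q_def vec_eq_iff)
  moreover have "((\<lambda>\<theta>. cos \<theta> *\<^sub>R P + sin \<theta> *\<^sub>R Q + (\<chi> k. if k = i \<or> k = j then 0 else v$k))
      has_vector_derivative (- sin \<theta>) *\<^sub>R P + cos \<theta> *\<^sub>R Q) (at \<theta>)"
    by (auto intro!: derivative_eq_intros)
  moreover have "(- sin \<theta>) *\<^sub>R P + cos \<theta> *\<^sub>R Q =
      (\<chi> k. if k = i then - plane_rotation i j \<theta> v $ j
            else if k = j then plane_rotation i j \<theta> v $ i else 0)"
    using assms by (auto simp: plane_rotation_def P_def Q_def vec_eq_iff)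
  ultimately show ?thesis by simp
qed

lemma rotation_invariant:
  fixes f :: "pt \<Rightarrow> real"
  assumes "i \<noteq> j"
    and diff: "\<And>w. f differentiable (at (t, x, w))"
    and angular: "\<And>w. w$i * dirD f (t, x, w) (e_v j) - w$j * dirD f (t, x, w) (e_v i) = 0"
  shows "f (t, x, plane_rotation i j \<theta> v) = f (t, x, v)"
proof -
  have "((\<lambda>\<theta>. f (t, x, plane_rotation i j \<theta> v)) has_real_derivative 0) (at \<theta>)" for \<theta>
  proof -
    let ?w = "plane_rotation i j \<theta> v"
    let ?d = "(\<chi> k. if k = i then - ?w $ j else if k = j then ?w $ i else 0) :: real^3"
    have "((\<lambda>\<theta>. (t, x, plane_rotation i j \<theta> v)) has_vector_derivative (0, 0, ?d)) (at \<theta>)"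
      using plane_rotation_has_vector_derivative[OF \<open>i \<noteq> j\<close>]
      by (intro has_vector_derivative_Pair has_vector_derivative_const)
    from dirD_chain[OF diff this] have
      "((\<lambda>\<theta>. f (t, x, plane_rotation i j \<theta> v)) has_real_derivative
         (\<Sum>k\<in>UNIV. ?d $ k * dirD f (t, x, ?w) (e_v k))) (at \<theta>)"
      unfolding dirD_coordinate_expansion[OF diff, of ?w "(0, 0, ?d)"] by simp
    moreover have "(\<Sum>k\<in>UNIV. ?d $ k * dirD f (t, x, ?w) (e_v k))
        = - ?w $ j * dirD f (t, x, ?w) (e_v i) + ?w $ i * dirD f (t, x, ?w) (e_v j)"
      using \<open>i \<noteq> j\<close> exhaust_3[of i] exhaust_3[of j] by (auto simp: sum_3)
    ultimately show ?thesis using angular[of ?w] by simp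
  qed
  hence "f (t, x, plane_rotation i j \<theta> v) = f (t, x, plane_rotation i j 0 v)"
    by (intro DERIV_isconst_all allI)
  thus ?thesis by simp
qed

lemma rotation_into_axis:
  fixes f :: "pt \<Rightarrow> real"
  assumes "i \<noteq> j"
    and diff: "\<And>w. f differentiable (at (t, x, w))"
    and angular: "\<And>w. w$i * dirD f (t, x, w) (e_v j) - w$j * dirD f (t, x, w) (e_v i) = 0"
  shows "f (t, x, v) =
    f (t, x, \<chi> k. if k = i then sqrt ((v$i)^2 + (v$j)^2) else if k = j then 0 else v$k)"
proof (cases "(v$i)^2 + (v$j)^2 = 0")
  case True
  hence "v$i = 0" "v$j = 0" by (simp_all add: sum_power2_eq_zero_iff)
  hence "(\<chi> k. if k = i then sqrt ((v$i)^2 + (v$j)^2) else if k = j then 0 else v$k) = v"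
    by (simp add: vec_eq_iff)
  thus ?thesis by simp
next
  case False
  define \<rho> where "\<rho> = sqrt ((v$i)^2 + (v$j)^2)"
  have \<rho>: "\<rho> > 0" using False by (simp add: \<rho>_def add_nonneg_nonneg order_le_neq_trans)
  have \<rho>2: "\<rho>^2 = (v$i)^2 + (v$j)^2" by (simp add: \<rho>_def add_nonneg_nonneg)
  have "(v$i / \<rho>)^2 + (- v$j / \<rho>)^2 = 1"
    using False by (simp add: power_divide \<rho>2 add_divide_distrib[symmetric])
  then obtain \<theta> where \<theta>: "v$i / \<rho> = cos \<theta>" "- v$j / \<rho> = sin \<theta>" by (rule sincos_total_2pi)
  have "cos \<theta> * v$i - sin \<theta> * v$j = \<rho>^2 / \<rho>"
    unfolding \<theta>[symmetric] \<rho>2 by (simp add: power2_eq_square add_divide_distrib)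
  hence "cos \<theta> * v$i - sin \<theta> * v$j = \<rho>"
    by (simp add: power2_eq_square)
  moreover have "sin \<theta> * v$i + cos \<theta> * v$j = 0"
    unfolding \<theta>[symmetric] using \<rho> by (simp add: field_simps)
  ultimately have "plane_rotation i j \<theta> v = (\<chi> k. if k = i then \<rho> else if k = j then 0 else v$k)"
    using \<open>i \<noteq> j\<close> by (auto simp: plane_rotation_def vec_eq_iff)
  with rotation_invariant[OF assms, of \<theta> v] show ?thesis
    by (simp only: \<rho>_def)
qed

lemma invariant_translation_independent:
  fixes f :: "pt \<Rightarrow> real"
  assumes smooth: "Cinf_on (UmM I) f" and inv: "invariant I f" and t: "t \<in> I"
  shows "f (t, x, v) = f (t, 0, v)"
proof -
  have diff: "f differentiable (at (t, y, w))" for y w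
    using Cinf_on_differentiable[OF smooth] t by (simp add: UmM_def)
  have line: "((\<lambda>s. (t, s *\<^sub>R x, v)) has_vector_derivative (0, x, 0)) (at s)" for s
    by (intro has_vector_derivative_Pair has_vector_derivative_const)
       (auto intro!: derivative_eq_intros)
  have "dirD f (t, s *\<^sub>R x, v) (0, x, 0) = 0" for s
    using inv t unfolding dirD_coordinate_expansion[OF diff, of _ _ "(0, x, 0)"]
    by (simp add: invariant_def UmM_def)
  hence "((\<lambda>s. f (t, s *\<^sub>R x, v)) has_real_derivative 0) (at s)" for s
    using dirD_chain[OF diff line, of s] by simp
  hence "f (t, 1 *\<^sub>R x, v) = f (t, 0 *\<^sub>R x, v)"
    by (intro DERIV_isconst_all allI)
  thus ?thesis by simp
qed

lemma invariant_rotation_independent: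
  fixes f :: "pt \<Rightarrow> real"
  assumes smooth: "Cinf_on (UmM I) f" and inv: "invariant I f" and t: "t \<in> I"
  shows "f (t, 0, v) = f (t, 0, norm v *\<^sub>R axis 1 1)"
proof -
  have diff: "f differentiable (at (t, 0, w))" for w
    using Cinf_on_differentiable[OF smooth] t by (simp add: UmM_def)
  have angular: "w$i * dirD f (t, 0, w) (e_v j) - w$j * dirD f (t, 0, w) (e_v i) = 0" for w i j
    using inv[unfolded invariant_def, rule_format, of "(t, 0, w)"] t by (simp add: UmM_def)
  define u where "u = (\<chi> k. if k = 1 then sqrt ((v$1)^2 + (v$2)^2) else if k = 2 then 0 else v$k)"
  have "f (t, 0, v) = f (t, 0, u)"
    unfolding u_def by (rule rotation_into_axis[OF _ diff angular]) simp
  also have "\<dots> = f (t, 0, \<chi> k. if k = 1 then sqrt ((u$1)^2 + (u$3)^2) else if k = 3 then 0 else u$k)"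
    by (rule rotation_into_axis[OF _ diff angular]) simp
  also have "(\<chi> k. if k = 1 then sqrt ((u$1)^2 + (u$3)^2) else if k = 3 then 0 else u$k)
             = norm v *\<^sub>R axis 1 1"
    by (simp add: vec_eq_iff forall_3 u_def axis_def norm_vec_def L2_set_def sum_3 add_nonneg_nonneg)
  finally show ?thesis .
qed

lemma invariant_imp_radial_on:
  fixes f :: "pt \<Rightarrow> real"
  assumes "Cinf_on (UmM I) f" and "invariant I f"
  shows "radial_on I f"
  unfolding radial_on_def
  using invariant_translation_independent[OF assms] invariant_rotation_independent[OF assms] by metis

section \<open>Radial distribution functions\<close>

locale radial_smooth =
  fixes I :: "real set" and f :: "pt \<Rightarrow> real"
  assumes open_I: "open I" and smooth: "Cinf_on (UmM I) f" and radial: "radial_on I f"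
begin

definition "prof t q = f (t, 0, q *\<^sub>R axis 1 1)"
definition "prof_t t q = dirD f (t, 0, q *\<^sub>R axis 1 1) e_t"
definition "prof_q t q = dirD f (t, 0, q *\<^sub>R axis 1 1) (e_v 1)"
definition "prof_qq t q = dirD (\<lambda>w. dirD f w (e_v 1)) (t, 0, q *\<^sub>R axis 1 1) (e_v 1)"

lemma in_UmM: "t \<in> I \<Longrightarrow> (t, x, v) \<in> UmM I"
  by (simp add: UmM_def)

lemma f_eq_prof: "t \<in> I \<Longrightarrow> f (t, x, v) = prof t (norm v)"
  using radial unfolding radial_on_def prof_def by blast

lemma f_differentiable: "t \<in> I \<Longrightarrow> f differentiable (at (t, x, v))"
  using Cinf_on_differentiable[OF smooth in_UmM] .

lemma dirD_e_v1_differentiable: "t \<in> I \<Longrightarrow> (\<lambda>w. dirD f w (e_v 1)) differentiable (at (t, x, v))"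
  using Cinf_on_differentiable[OF Cinf_on_dirD[OF smooth e_v_Basis] in_UmM] .

lemma axis_line_has_vector_derivative:
  "((\<lambda>q. (t, 0::real^3, q *\<^sub>R axis 1 1)) has_vector_derivative e_v 1) (at q)"
  unfolding e_v_def
  by (intro has_vector_derivative_Pair has_vector_derivative_const)
     (auto intro!: derivative_eq_intros)

lemma prof_has_derivative_q: "t \<in> I \<Longrightarrow> (prof t has_real_derivative prof_q t q) (at q)"
  using dirD_chain[OF f_differentiable axis_line_has_vector_derivative]
  by (simp add: prof_def[abs_def] prof_q_def)

lemma prof_q_has_derivative_q: "t \<in> I \<Longrightarrow> (prof_q t has_real_derivative prof_qq t q) (at q)"
  using dirD_chain[OF dirD_e_v1_differentiable axis_line_has_vector_derivative]
  by (simp add: prof_q_def[abs_def] prof_qq_def)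

lemma prof_has_derivative_t:
  assumes "t \<in> I"
  shows "((\<lambda>s. prof s q) has_real_derivative prof_t t q) (at t)"
proof -
  have "((\<lambda>s. (s, 0::real^3, q *\<^sub>R axis 1 1)) has_vector_derivative e_t) (at t)"
    unfolding e_t_def
    by (intro has_vector_derivative_Pair has_vector_derivative_const has_vector_derivative_id)
  from dirD_chain[OF f_differentiable[OF assms] this] show ?thesis
    by (simp add: prof_def prof_t_def)
qed

lemma dirD_e_x: "t \<in> I \<Longrightarrow> dirD f (t, x, v) (e_x j) = 0"
  unfolding dirD_def e_x_def by (simp add: f_eq_prof)

lemma dirD_e_t:
  assumes t: "t \<in> I"
  shows "dirD f (t, x, v) e_t = prof_t t (norm v)"
proof -
  have "((\<lambda>s. prof (s + t) (norm v)) has_real_derivative prof_t t (norm v)) (at 0)"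
    using DERIV_shift prof_has_derivative_t[OF t] by fastforce
  moreover have "open ((\<lambda>s. s + t) -` I)"
    using open_I by (intro open_vimage continuous_intros) auto
  moreover have "0 \<in> (\<lambda>s. s + t) -` I" using t by simp
  ultimately have "((\<lambda>s. f ((t, x, v) + s *\<^sub>R e_t)) has_real_derivative prof_t t (norm v)) (at 0)"
    by (rule has_field_derivative_transform_within_open) (simp add: e_t_def f_eq_prof add.commute)
  thus ?thesis unfolding dirD_def by (rule DERIV_imp_deriv)
qed

lemma dirD_e_v:
  assumes t: "t \<in> I" and v: "v \<noteq> 0"
  shows "dirD f (t, x, v) (e_v j) = prof_q t (norm v) * (v$j / norm v)"
proof -
  have "axis j 1 \<bullet> v = v$j"
    by (simp add: inner_axis')
  hence "((\<lambda>s. prof t (norm (v + s *\<^sub>R axis j 1))) has_real_derivative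
          prof_q t (norm v) * (v$j / norm v)) (at 0)"
    using DERIV_chain2[OF prof_has_derivative_q[OF t] has_real_derivative_norm_line[OF v, of "axis j 1"]]
    by simp
  moreover have "f ((t, x, v) + s *\<^sub>R e_v j) = prof t (norm (v + s *\<^sub>R axis j 1))" for s
    using f_eq_prof[OF t] by (simp add: e_v_def)
  ultimately have "((\<lambda>s. f ((t, x, v) + s *\<^sub>R e_v j)) has_real_derivative
                      prof_q t (norm v) * (v$j / norm v)) (at 0)"
    by simp
  thus ?thesis unfolding dirD_def by (rule DERIV_imp_deriv)
qed

lemma dirD_e_v_e_v:
  assumes t: "t \<in> I" and v: "v \<noteq> 0"
  shows "dirD (\<lambda>w. dirD f w (e_v j)) (t, x, v) (e_v i)
    = (prof_qq t (norm v) / (norm v)^2 - prof_q t (norm v) / (norm v)^3) * (v$i * v$j)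
      + (prof_q t (norm v) / norm v) * (if i = j then 1 else 0)"
proof -
  define N where "N s = norm (v + s *\<^sub>R axis i (1::real))" for s
  define W where "W s = (v + s *\<^sub>R axis i (1::real)) $ j" for s
  have "axis i 1 \<bullet> v = v$i"
    by (simp add: inner_axis')
  hence N': "(N has_real_derivative v$i / norm v) (at 0)"
    unfolding N_def using has_real_derivative_norm_line[OF v, of "axis i 1"] by simp
  have "W = (\<lambda>s. v$j + s * (if i = j then 1 else 0))"
    by (auto simp: W_def axis_def)
  hence W': "(W has_real_derivative (if i = j then 1 else 0)) (at 0)"
    by (auto intro!: derivative_eq_intros)
  have "((\<lambda>s. prof_q t (N s) * (W s / N s)) has_real_derivative
      prof_qq t (norm v) * (v$i / norm v) * (v$j / norm v)
      + (((if i = j then 1 else 0) * norm v - v$j * (v$i / norm v)) / (norm v * norm v))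
        * prof_q t (norm v)) (at 0)"
    using DERIV_mult[OF DERIV_chain2[OF prof_q_has_derivative_q[OF t] N'] DERIV_divide[OF W' N']] v
    by (simp add: N_def W_def)
  moreover have "open ((\<lambda>s. v + s *\<^sub>R axis i (1::real)) -` (- {0}))"
    by (intro open_vimage continuous_intros)
  ultimately have "((\<lambda>s. dirD f ((t, x, v) + s *\<^sub>R e_v i) (e_v j)) has_real_derivative
      prof_qq t (norm v) * (v$i / norm v) * (v$j / norm v)
      + (((if i = j then 1 else 0) * norm v - v$j * (v$i / norm v)) / (norm v * norm v))
        * prof_q t (norm v)) (at 0)"
    by (rule has_field_derivative_transform_within_open) (use v dirD_e_v[OF t] in \<open>auto simp: e_v_def N_def W_def\<close>)
  hence "dirD (\<lambda>w. dirD f w (e_v j)) (t, x, v) (e_v i) =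
      prof_qq t (norm v) * (v$i / norm v) * (v$j / norm v)
      + (((if i = j then 1 else 0) * norm v - v$j * (v$i / norm v)) / (norm v * norm v))
        * prof_q t (norm v)"
    unfolding dirD_def[of "\<lambda>w. dirD f w (e_v j)"] by (rule DERIV_imp_deriv)
  thus ?thesis using v by (simp add: field_simps power2_eq_square power3_eq_cube)
qed

lemma continuous_on_axis_line:
  assumes "Cinf_on (UmM I) g" and "t \<in> I"
  shows "continuous_on UNIV (\<lambda>q. g (t, 0, q *\<^sub>R axis 1 1))"
proof (rule continuous_on_compose2[OF Cinf_on_continuous_on[OF assms(1)]])
  show "continuous_on UNIV (\<lambda>q::real. (t, 0::real^3, q *\<^sub>R axis 1 1 :: real^3))"
    by (intro continuous_intros)
qed (use assms(2) in \<open>auto simp: UmM_def\<close>)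

lemma prof_continuous: "t \<in> I \<Longrightarrow> continuous_on UNIV (prof t)"
  unfolding prof_def[abs_def] by (rule continuous_on_axis_line[OF smooth])

lemma prof_t_continuous: "t \<in> I \<Longrightarrow> continuous_on UNIV (prof_t t)"
  unfolding prof_t_def[abs_def] by (rule continuous_on_axis_line[OF Cinf_on_dirD[OF smooth e_t_Basis]])

lemma prof_q_continuous: "t \<in> I \<Longrightarrow> continuous_on UNIV (prof_q t)"
  unfolding prof_q_def[abs_def] by (rule continuous_on_axis_line[OF Cinf_on_dirD[OF smooth e_v_Basis]])

lemma invariant: "invariant I f"
  unfolding invariant_def
proof (intro ballI conjI allI)
  fix z i j assume "z \<in> UmM I"
  then obtain t x v where z: "z = (t, x, v)" and t: "t \<in> I"
    by (cases z) (auto simp: UmM_def)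
  show "dirD f z (e_x i) = 0"
    unfolding z by (rule dirD_e_x[OF t])
  show "fst (snd z) $ i * dirD f z (e_x j) - fst (snd z) $ j * dirD f z (e_x i) +
        snd (snd z) $ i * dirD f z (e_v j) - snd (snd z) $ j * dirD f z (e_v i) = 0"
    using dirD_e_x[OF t] dirD_e_v[OF t] by (cases "v = 0") (simp_all add: z)
qed

lemma spray_eq:
  assumes t: "t \<in> I" and v: "v \<noteq> 0"
  shows "spray a m f (t, x, v) =
    vzero a m t v * (prof_t t (norm v) - 2 * (deriv a t / a t) * (norm v * prof_q t (norm v)))"
proof -
  have "(\<Sum>i\<in>UNIV. v$i * (prof_q t (norm v) * (v$i / norm v))) = prof_q t (norm v) / norm v * (v \<bullet> v)"
    by (simp add: inner_vec_def sum_distrib_left mult_ac)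
  also have "\<dots> = norm v * prof_q t (norm v)"
    using v by (simp add: power2_norm_eq_inner[symmetric] power2_eq_square)
  finally show ?thesis
    unfolding spray_def Let_def using dirD_e_v[OF t v] dirD_e_t[OF t] dirD_e_x[OF t] by simp
qed

lemma vlap_eq:
  assumes t: "t \<in> I" and v: "v \<noteq> 0" and m: "m \<noteq> 0" and a: "a t \<noteq> 0"
  shows "vlap a m f (t, x, v) = prof_qq t (norm v) * (1 / (a t)^2 + (norm v)^2 / m^2)
     + prof_q t (norm v) * (2 / ((a t)^2 * norm v) + 3 * norm v / m^2)"
proof -
  define \<alpha> where "\<alpha> = prof_qq t (norm v) / (norm v)^2 - prof_q t (norm v) / (norm v)^3"
  define \<beta> where "\<beta> = prof_q t (norm v) / norm v"
  have "vlap a m f (t, x, v) =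
    (\<Sum>i\<in>UNIV. \<Sum>j\<in>UNIV. ((if i = j then 1 else 0) / (a t)^2 + v$i * v$j / m^2) *
       (\<alpha> * (v$i * v$j) + \<beta> * (if i = j then 1 else 0)))
    + (\<Sum>i\<in>UNIV. 3 * v$i / m^2 * (\<beta> * v$i))"
    unfolding vlap_def Let_def fst_conv snd_conv dirD_e_v_e_v[OF t v] dirD_e_v[OF t v] \<alpha>_def \<beta>_def
    by (simp add: mult_ac)
  also have "\<dots> = \<alpha> * (v \<bullet> v) / (a t)^2 + 3 * \<beta> / (a t)^2 + \<alpha> * (v \<bullet> v) * (v \<bullet> v) / m^2
      + \<beta> * (v \<bullet> v) / m^2 + 3 * \<beta> / m^2 * (v \<bullet> v)"
    by (simp add: sum_3 inner_vec_def add_divide_distrib algebra_simps)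
  also have "\<dots> = prof_qq t (norm v) * (1 / (a t)^2 + (norm v)^2 / m^2)
     + prof_q t (norm v) * (2 / ((a t)^2 * norm v) + 3 * norm v / m^2)"
    using v m a unfolding \<alpha>_def \<beta>_def power2_norm_eq_inner[symmetric]
    by (simp add: field_simps power2_eq_square power3_eq_cube)
  finally show ?thesis .
qed

lemma prof_measurable [measurable]: "t \<in> I \<Longrightarrow> prof t \<in> borel_measurable borel"
  by (rule borel_measurable_continuous_onI[OF prof_continuous])

lemma Jsp_eq_0:
  assumes t: "t \<in> I"
  shows "Jsp a m f i t x = 0"
proof -
  have "integral\<^sup>L lborel (\<lambda>v::real^3. v$i * prof t (norm v) * (m * (a t)^3 / vzero a m t v)) = 0"
    using t by (intro lborel_integral_odd_eq_0) (auto simp: vzero_def)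
  thus ?thesis unfolding Jsp_def f_eq_prof[OF t] by simp
qed

end

section \<open>Reduction to the momentum variable\<close>

lemma radial_on_iff_pmom_form:
  assumes a_pos: "\<forall>t\<in>I. a t > 0"
  shows "radial_on I f \<longleftrightarrow> (\<exists>F. \<forall>z\<in>UmM I. f z = F (fst z) (pmom a (fst z) (snd (snd z))))"
proof
  assume radial: "radial_on I f"
  show "\<exists>F. \<forall>z\<in>UmM I. f z = F (fst z) (pmom a (fst z) (snd (snd z)))"
  proof (intro exI ballI)
    fix z assume "z \<in> UmM I"
    then obtain t x v where z: "z = (t, x, v)" and t: "t \<in> I"
      by (cases z) (auto simp: UmM_def)
    have "a t > 0" using a_pos t by blast
    hence "norm v = pmom a t v / (a t)^2" by (simp add: pmom_def)
    moreover have "f (t, x, v) = f (t, 0, norm v *\<^sub>R axis 1 1)"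
      using radial t unfolding radial_on_def by blast
    ultimately show "f z = (\<lambda>t p. f (t, 0, (p / (a t)^2) *\<^sub>R axis 1 1)) (fst z) (pmom a (fst z) (snd (snd z)))"
      by (simp add: z)
  qed
next
  assume "\<exists>F. \<forall>z\<in>UmM I. f z = F (fst z) (pmom a (fst z) (snd (snd z)))"
  then obtain F where F: "\<And>z. z \<in> UmM I \<Longrightarrow> f z = F (fst z) (pmom a (fst z) (snd (snd z)))"
    by blast
  show "radial_on I f"
    unfolding radial_on_def
  proof (intro ballI allI)
    fix t x v assume "t \<in> I"
    hence "(t, x, v) \<in> UmM I" "(t, 0, norm v *\<^sub>R axis 1 1) \<in> UmM I"
      by (simp_all add: UmM_def)
    thus "f (t, x, v) = f (t, 0, norm v *\<^sub>R axis 1 1)"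
      using F by (simp add: pmom_def)
  qed
qed

locale reduced_density = radial_smooth +
  fixes a :: "real \<Rightarrow> real" and F :: "real \<Rightarrow> real \<Rightarrow> real"
  assumes a_pos: "t \<in> I \<Longrightarrow> a t > 0"
    and a_deriv: "t \<in> I \<Longrightarrow> (a has_real_derivative deriv a t) (at t)"
    and F_rep: "z \<in> UmM I \<Longrightarrow> f z = F (fst z) (pmom a (fst z) (snd (snd z)))"
begin

lemma F_eq_prof:
  assumes t: "t \<in> I" and p: "p \<ge> 0"
  shows "F t p = prof t (p / (a t)^2)"
proof -
  have "pmom a t ((p / (a t)^2) *\<^sub>R axis 1 1) = p"
    using a_pos[OF t] p by (simp add: pmom_def)
  thus ?thesis
    using F_rep[OF in_UmM[OF t], of 0 "(p / (a t)^2) *\<^sub>R axis 1 1"] by (simp add: prof_def)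
qed

lemma rescale_has_derivative:
  "t \<in> I \<Longrightarrow> ((\<lambda>q. q / (a t)^2) has_real_derivative 1 / (a t)^2) (at p)"
  using DERIV_cdivide[OF DERIV_ident, of "(a t)^2" p] by simp

lemma F_has_derivative_p:
  assumes t: "t \<in> I" and p: "p > 0"
  shows "(F t has_real_derivative prof_q t (p / (a t)^2) / (a t)^2) (at p)"
proof -
  have "((\<lambda>q. prof t (q / (a t)^2)) has_real_derivative prof_q t (p / (a t)^2) / (a t)^2) (at p)"
    using DERIV_chain2[OF prof_has_derivative_q[OF t] rescale_has_derivative[OF t]] by simp
  thus ?thesis
    by (rule has_field_derivative_transform_within_open[where S="{0<..}"])
       (use p F_eq_prof[OF t] in auto)
qed

lemma dp_eq: "t \<in> I \<Longrightarrow> p > 0 \<Longrightarrow> dp F t p = prof_q t (p / (a t)^2) / (a t)^2"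
  unfolding dp_def using F_has_derivative_p by (rule DERIV_imp_deriv)

lemma dp_has_derivative_p:
  assumes t: "t \<in> I" and p: "p > 0"
  shows "(dp F t has_real_derivative prof_qq t (p / (a t)^2) / (a t)^4) (at p)"
proof -
  have "((\<lambda>q. prof_q t (q / (a t)^2) / (a t)^2) has_real_derivative
          prof_qq t (p / (a t)^2) / (a t)^4) (at p)"
    using DERIV_cdivide[OF DERIV_chain2[OF prof_q_has_derivative_q[OF t] rescale_has_derivative[OF t]],
        of "(a t)^2"]
    by (simp add: divide_divide_eq_left power_add[symmetric])
  thus ?thesis
    by (rule has_field_derivative_transform_within_open[where S="{0<..}"])
       (use p dp_eq[OF t] in auto)
qed

lemma dpp_eq: "t \<in> I \<Longrightarrow> p > 0 \<Longrightarrow> dpp F t p = prof_qq t (p / (a t)^2) / (a t)^4"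
  unfolding dpp_def using dp_has_derivative_p by (rule DERIV_imp_deriv)

lemma F_has_derivative_t:
  assumes t: "t \<in> I" and p: "p > 0"
  shows "((\<lambda>s. F s p) has_real_derivative
           prof_t t (p / (a t)^2) - 2 * p * deriv a t / (a t)^3 * prof_q t (p / (a t)^2)) (at t)"
proof -
  have "a t \<noteq> 0" using a_pos[OF t] by simp
  hence "((\<lambda>s. p / (a s)^2) has_real_derivative - 2 * p * deriv a t / (a t)^3) (at t)"
    using a_deriv[OF t]
    by (auto intro!: derivative_eq_intros simp: field_simps power2_eq_square power3_eq_cube)
  from has_vector_derivative_scaleR[OF this has_vector_derivative_const[of "axis 1 1 :: real^3"]]
  have "((\<lambda>s. (p / (a s)^2) *\<^sub>R (axis 1 1 :: real^3)) has_vector_derivative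
          (- 2 * p * deriv a t / (a t)^3) *\<^sub>R (axis 1 1 :: real^3)) (at t)"
    by simp
  hence "((\<lambda>s. (s, 0, (p / (a s)^2) *\<^sub>R axis 1 1) :: pt) has_vector_derivative
            (1, 0, (- 2 * p * deriv a t / (a t)^3) *\<^sub>R axis 1 1)) (at t)"
    by (intro has_vector_derivative_Pair has_vector_derivative_id has_vector_derivative_const)
  from dirD_chain[OF f_differentiable[OF t] this]
  have "((\<lambda>s. prof s (p / (a s)^2)) has_real_derivative
           prof_t t (p / (a t)^2) - 2 * p * deriv a t / (a t)^3 * prof_q t (p / (a t)^2)) (at t)"
    unfolding dirD_coordinate_expansion[OF f_differentiable[OF t],
        of _ _ "(1, 0, (- 2 * p * deriv a t / (a t)^3) *\<^sub>R axis 1 1)"]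
    by (simp add: prof_def prof_t_def prof_q_def sum_3 axis_def)
  thus ?thesis
    by (rule has_field_derivative_transform_within_open[where S=I])
       (use t open_I p F_eq_prof in auto)
qed

lemma dt_eq:
  "t \<in> I \<Longrightarrow> p > 0 \<Longrightarrow>
    dt F t p = prof_t t (p / (a t)^2) - 2 * p * deriv a t / (a t)^3 * prof_q t (p / (a t)^2)"
  unfolding dt_def using F_has_derivative_t by (rule DERIV_imp_deriv)

lemma FP_eq:
  assumes t: "t \<in> I" and v: "v \<noteq> 0" and m: "m > 0"
  shows "FP a m \<sigma> f (t, x, v) =
    sqrt (m^2 * (a t)^2 + (pmom a t v)^2) / a t * dt F t (pmom a t v)
     - \<sigma>^2 / 2 * (((a t)^2 + (pmom a t v)^2 / m^2) * dpp F t (pmom a t v)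
        + (2 * (a t)^2 / pmom a t v + 3 * pmom a t v / m^2) * dp F t (pmom a t v))"
proof -
  define A where "A = a t"
  define r where "r = norm v"
  have A: "A > 0" using a_pos[OF t] by (simp add: A_def)
  have r: "r > 0" using v by (simp add: r_def)
  have p: "pmom a t v = A^2 * r" by (simp add: pmom_def A_def r_def)
  have p_pos: "A^2 * r > 0" using A r by simp
  have rescale: "A^2 * r / A^2 = r" using A by simp
  have m_nz: "m \<noteq> 0" and A_nz: "A \<noteq> 0" using m A by simp_all
  have "sqrt (m^2 * A^2 + (A^2 * r)^2) = sqrt (A^2 * (m^2 + A^2 * r^2))"
    by (simp add: algebra_simps power2_eq_square)
  also have "\<dots> = A * vzero a m t v"
    using A by (simp add: real_sqrt_mult vzero_def A_def r_def)
  finally have sqrt_eq: "sqrt (m^2 * A^2 + (A^2 * r)^2) = A * vzero a m t v" .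
  have spray: "sqrt (m^2 * A^2 + (A^2 * r)^2) / A * dt F t (A^2 * r) = spray a m f (t, x, v)"
    unfolding spray_eq[OF t v] sqrt_eq dt_eq[OF t p_pos] rescale A_def[symmetric] r_def[symmetric]
    using A r by (simp add: field_simps power2_eq_square power3_eq_cube)
  have vlap: "(A^2 + (A^2 * r)^2 / m^2) * dpp F t (A^2 * r)
        + (2 * A^2 / (A^2 * r) + 3 * (A^2 * r) / m^2) * dp F t (A^2 * r) = vlap a m f (t, x, v)"
    unfolding vlap_eq[of t v m a, OF t v m_nz A_nz[unfolded A_def]] dpp_eq[OF t p_pos] dp_eq[OF t p_pos] rescale A_def[symmetric] r_def[symmetric]
    using A r m by (simp add: field_simps)
  show ?thesis unfolding FP_def p A_def[symmetric] spray vlap ..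
qed

lemma FP_eq_0_iff:
  assumes "z \<in> UmM I" and "snd (snd z) \<noteq> 0" and "m > 0"
  shows "FP a m \<sigma> f z = 0 \<longleftrightarrow> FPred a m \<sigma> F (fst z) (pmom a (fst z) (snd (snd z)))"
  using assms by (cases z) (simp add: UmM_def FP_eq FPred_def)

lemma J0_eq:
  assumes t: "t \<in> I" and m: "m > 0"
  shows "(a t)^3 * J0 a m f t x = 4 * pi * set_lebesgue_integral lborel {0..} (\<lambda>p. p^2 * F t p)"
proof -
  define A where "A = a t"
  have A: "A > 0" using a_pos[OF t] by (simp add: A_def)
  define R where "R = (\<integral>r. indicator {0..} r * (4 * pi * r^2) * prof t r \<partial>lborel)"
  have "vzero a m t v > 0" for v
    unfolding vzero_def using m by (intro real_sqrt_gt_zero add_pos_nonneg) auto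
  hence "vzero a m t v * f (t, x, v) * (m * (a t)^3 / vzero a m t v) = m * (A^3 * prof t (norm v))" for v
    by (simp add: f_eq_prof[OF t] A_def less_imp_neq[symmetric])
  hence "J0 a m f t x = A^3 * (\<integral>v. prof t (norm v) \<partial>(lborel::(real^3) measure))"
    using m by (simp add: J0_def)
  also have "\<dots> = A^3 * R"
    unfolding R_def using t by (simp add: lborel_integral_radial radial_volume_density_def unit_ball_vol_3)
  finally have J0: "A^3 * J0 a m f t x = A^6 * R"
    by (simp add: power_add[symmetric])
  have "set_lebesgue_integral lborel {0..} (\<lambda>p. p^2 * F t p)
        = A^2 * (\<integral>r. indicator {0..} (A^2 * r) * ((A^2 * r)^2 * F t (A^2 * r)) \<partial>lborel)"
    using lborel_integral_real_affine[of "A^2" "\<lambda>p. indicator {0..} p * (p^2 * F t p)" 0] A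
    by (simp add: set_lebesgue_integral_def)
  also have "(\<integral>r. indicator {0..} (A^2 * r) * ((A^2 * r)^2 * F t (A^2 * r)) \<partial>lborel)
      = (\<integral>r. A^4 / (4 * pi) * (indicator {0..} r * (4 * pi * r^2) * prof t r) \<partial>lborel)"
  proof (rule Bochner_Integration.integral_cong)
    fix r :: real
    show "indicator {0..} (A^2 * r) * ((A^2 * r)^2 * F t (A^2 * r))
        = A^4 / (4 * pi) * (indicator {0..} r * (4 * pi * r^2) * prof t r)"
      using A F_eq_prof[OF t, of "A^2 * r"]
      by (cases "r \<ge> 0") (auto simp: A_def zero_le_mult_iff field_simps)
  qed simp
  also have "\<dots> = A^4 / (4 * pi) * R"
    unfolding R_def by (rule integral_mult_right_zero)
  finally show ?thesis
    unfolding A_def[symmetric] J0 by (simp add: power_add[symmetric])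
qed

section \<open>Conservation of the particle number\<close>

lemma dt_isCont:
  assumes t: "t \<in> I" and p: "p > 0"
  shows "isCont (\<lambda>q. q^2 * dt F t q) p"
proof -
  have cont: "isCont (\<lambda>q. q^2 * (prof_t t (q / (a t)^2)
                   - 2 * q * deriv a t / (a t)^3 * prof_q t (q / (a t)^2))) p"
  proof -
    have ct: "isCont (prof_t t) x" and cq: "isCont (prof_q t) x" for x
      using prof_t_continuous[OF t] prof_q_continuous[OF t]
      by (simp_all add: continuous_on_eq_continuous_at)
    show ?thesis
      using a_pos[OF t] by (intro continuous_intros isCont_o2[OF _ ct] isCont_o2[OF _ cq]) auto
  qed
  have "\<forall>\<^sub>F q in nhds p. q \<in> {0<..}"
    using p by (intro eventually_nhds_in_open) auto
  hence "\<forall>\<^sub>F q in nhds p. q^2 * dt F t q = q^2 * (prof_t t (q / (a t)^2)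
                   - 2 * q * deriv a t / (a t)^3 * prof_q t (q / (a t)^2))"
    by eventually_elim (auto simp: dt_eq[OF t])
  thus ?thesis using cont isCont_cong by fastforce
qed

lemma FPred_divergence_form:
  assumes t: "t \<in> I" and p: "p > 0" and m: "m > 0" and FP: "FPred a m \<sigma> F t p"
  shows "p^2 * dt F t p = \<sigma>^2 * a t / (2 * m^2) *
     ((2 * p * sqrt (m^2 * (a t)^2 + p^2) + p^3 / sqrt (m^2 * (a t)^2 + p^2)) * dp F t p
      + p^2 * sqrt (m^2 * (a t)^2 + p^2) * dpp F t p)"
proof -
  define A where "A = a t"
  define S where "S = sqrt (m^2 * A^2 + p^2)"
  have A: "A > 0" using a_pos[OF t] by (simp add: A_def)
  have S: "S > 0" unfolding S_def using p by (intro real_sqrt_gt_zero add_nonneg_pos) auto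
  have S2: "S^2 = m^2 * A^2 + p^2" unfolding S_def by simp
  have S2_m: "A^2 + p^2 / m^2 = S^2 / m^2" using m S2 by (simp add: field_simps)
  have "S / A * dt F t p = \<sigma>^2 / 2 * ((A^2 + p^2 / m^2) * dpp F t p
                                        + (2 * A^2 / p + 3 * p / m^2) * dp F t p)"
    using FP by (simp add: FPred_def A_def S_def)
  hence dt: "dt F t p = A / S * (\<sigma>^2 / 2 * ((S^2 / m^2) * dpp F t p
                                       + (2 * A^2 / p + 3 * p / m^2) * dp F t p))"
    using A S unfolding S2_m by (simp add: field_simps)
  have "2 * p * S + p^3 / S = (2 * p * S^2 + p^3) / S"
    using S by (simp add: field_simps power2_eq_square power3_eq_cube)
  also have "\<dots> = (2 * A^2 * m^2 * p + 3 * p^3) / S"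
    unfolding S2 by (simp add: algebra_simps power3_eq_cube power2_eq_square)
  finally show ?thesis
    unfolding A_def[symmetric] S_def[symmetric] dt
    using A S m p by (simp add: field_simps power2_eq_square power3_eq_cube)
qed

definition "p_flux m \<sigma> t p = \<sigma>^2 * a t / (2 * m^2) * (p^2 * sqrt (m^2 * (a t)^2 + p^2) * dp F t p)"

lemma p_flux_has_derivative:
  assumes t: "t \<in> I" and p: "p > 0" and m: "m > 0" and FP: "FPred a m \<sigma> F t p"
  shows "(p_flux m \<sigma> t has_real_derivative p^2 * dt F t p) (at p)"
proof -
  let ?S = "\<lambda>q. sqrt (m^2 * (a t)^2 + q^2)"
  have pos: "m^2 * (a t)^2 + p^2 > 0"
    using p by (intro add_nonneg_pos) auto
  have "((\<lambda>q. m^2 * (a t)^2 + q^2) has_real_derivative 2 * p) (at p)"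
    by (auto intro!: derivative_eq_intros)
  from DERIV_chain2[OF DERIV_real_sqrt[OF pos] this]
  have "(?S has_real_derivative inverse (?S p) / 2 * (2 * p)) (at p)" .
  moreover have "inverse (?S p) / 2 * (2 * p) = p / ?S p"
    by (simp add: field_simps)
  ultimately have S': "(?S has_real_derivative p / ?S p) (at p)"
    by simp
  have dp': "(dp F t has_real_derivative dpp F t p) (at p)"
    using dp_has_derivative_p[OF t p] dpp_eq[OF t p] by simp
  have "((\<lambda>q. q^2 * ?S q) has_real_derivative 2 * p * ?S p + p^2 * (p / ?S p)) (at p)"
    using DERIV_mult[OF DERIV_pow[of 2 p] S'] by (simp add: mult_ac)
  from DERIV_mult[OF this dp']
  have "((\<lambda>q. q^2 * ?S q * dp F t q) has_real_derivative
           (2 * p * ?S p + p^2 * (p / ?S p)) * dp F t p + dpp F t p * (p^2 * ?S p)) (at p)"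
    by simp
  hence "(p_flux m \<sigma> t has_real_derivative \<sigma>^2 * a t / (2 * m^2) *
           ((2 * p * ?S p + p^2 * (p / ?S p)) * dp F t p + dpp F t p * (p^2 * ?S p))) (at p)"
    unfolding p_flux_def[abs_def] by (rule DERIV_cmult)
  thus ?thesis
    unfolding FPred_divergence_form[OF t p m FP] by (simp add: algebra_simps power3_eq_cube power2_eq_square)
qed

lemma p_flux_tendsto_0:
  assumes t: "t \<in> I"
  shows "(p_flux m \<sigma> t \<longlongrightarrow> 0) (at_right 0)"
proof -
  define g where "g p = \<sigma>^2 * a t / (2 * m^2) * (p^2 * sqrt (m^2 * (a t)^2 + p^2)
                            * (prof_q t (p / (a t)^2) / (a t)^2))" for p
  have cq: "isCont (prof_q t) x" for x
    using prof_q_continuous[OF t] by (simp add: continuous_on_eq_continuous_at)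
  have "isCont g 0"
    unfolding g_def using a_pos[OF t] by (intro continuous_intros isCont_o2[OF _ cq]) auto
  hence "(g \<longlongrightarrow> 0) (at_right 0)"
    by (simp add: isCont_def g_def filterlim_at_split)
  moreover have "\<forall>\<^sub>F p in at_right 0. g p = p_flux m \<sigma> t p"
    using eventually_at_right_less[of "0::real"]
    by eventually_elim (simp add: g_def p_flux_def dp_eq[OF t])
  ultimately show ?thesis by (rule Lim_transform_eventually)
qed

lemma integral_p2_dt_eq_0:
  assumes t: "t \<in> I" and m: "m > 0" and FP: "\<And>p. p > 0 \<Longrightarrow> FPred a m \<sigma> F t p"
    and int: "set_integrable lborel {0<..} (\<lambda>p. p^2 * dt F t p)"
    and flux_top: "(p_flux m \<sigma> t \<longlongrightarrow> 0) at_top"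
  shows "set_lebesgue_integral lborel {0<..} (\<lambda>p. p^2 * dt F t p) = 0"
  using set_integral_Ioi_FTC[OF p_flux_has_derivative[OF t _ m FP] dt_isCont[OF t] int
      p_flux_tendsto_0[OF t] flux_top]
  by simp

end

locale decaying_solution = reduced_density +
  fixes m \<sigma> :: real
  assumes m_pos: "m > 0"
    and FP_solution: "\<And>t p. t \<in> I \<Longrightarrow> p > 0 \<Longrightarrow> FPred a m \<sigma> F t p"
    and F_integrable: "\<And>t. t \<in> I \<Longrightarrow> set_integrable lborel {0..} (\<lambda>p. p^2 * F t p)"
    and dt_majorant: "\<And>K. compact K \<Longrightarrow> K \<subseteq> I \<Longrightarrow>
        \<exists>g. set_integrable lborel {0<..} g \<and> (\<forall>t\<in>K. \<forall>p>0. \<bar>p^2 * dt F t p\<bar> \<le> g p)"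
    and no_flux_at_infinity: "\<And>t. t \<in> I \<Longrightarrow>
        ((\<lambda>p. p^2 * sqrt (m^2 * (a t)^2 + p^2) * dp F t p) \<longlongrightarrow> 0) at_top"
begin

lemma F_integrable_Ioi: "t \<in> I \<Longrightarrow> set_integrable lborel {0<..} (\<lambda>p. p^2 * F t p)"
  by (rule set_integrable_subset[OF F_integrable]) auto

lemma dt_integrable_Ioi:
  assumes t: "t \<in> I"
  shows "set_integrable lborel {0<..} (\<lambda>p. p^2 * dt F t p)"
proof -
  obtain g where g_int: "set_integrable lborel {0<..} g" and g_bound: "\<And>p. p > 0 \<Longrightarrow> \<bar>p^2 * dt F t p\<bar> \<le> g p"
    using dt_majorant[of "{t}"] t by auto
  show ?thesis
    unfolding set_integrable_def
  proof (rule Bochner_Integration.integrable_bound)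
    show "integrable lborel (\<lambda>p. indicator {0<..} p * g p)"
      using g_int by (simp add: set_integrable_def)
    show "(\<lambda>p. indicator {0<..} p *\<^sub>R (p^2 * dt F t p)) \<in> borel_measurable lborel"
      using borel_measurable_continuous_on_indicator[of "{0<..}" "\<lambda>p. p^2 * dt F t p"] dt_isCont[OF t]
      by (simp add: continuous_at_imp_continuous_on)
    show "AE p in lborel. norm (indicator {0<..} p *\<^sub>R (p^2 * dt F t p)) \<le> norm (indicator {0<..} p * g p)"
      using g_bound by (intro AE_I2) (auto simp: indicator_def intro: order_trans[OF _ abs_ge_self])
  qed
qed

lemma integral_p2_F_has_derivative_0:
  assumes t: "t \<in> I"
  shows "((\<lambda>\<tau>. set_lebesgue_integral lborel {0<..} (\<lambda>p. p^2 * F \<tau> p)) has_real_derivative 0) (at t)"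
proof -
  obtain \<delta> where \<delta>: "\<delta> > 0" "cball t \<delta> \<subseteq> I"
    using open_I t open_contains_cball by blast
  then obtain g where g_int: "set_integrable lborel {0<..} g"
    and g_bound: "\<And>\<tau> p. \<tau> \<in> ball t \<delta> \<Longrightarrow> p > 0 \<Longrightarrow> \<bar>p^2 * dt F \<tau> p\<bar> \<le> g p"
    using dt_majorant[OF compact_cball] by (meson ball_subset_cball subset_iff)
  have ball_I: "\<tau> \<in> ball t \<delta> \<Longrightarrow> \<tau> \<in> I" for \<tau>
    using \<delta>(2) by auto
  have deriv: "((\<lambda>\<tau>. indicator {0<..} p * (p^2 * F \<tau> p)) has_real_derivative
                 indicator {0<..} p * (p^2 * dt F \<tau> p)) (at \<tau>)" if "\<tau> \<in> I" for \<tau> p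
  proof (cases "p > 0")
    case True
    with F_has_derivative_t[OF that True] dt_eq[OF that True] show ?thesis
      by (auto intro!: derivative_eq_intros)
  qed simp
  have "((\<lambda>\<tau>. \<integral>p. indicator {0<..} p * (p^2 * F \<tau> p) \<partial>lborel) has_real_derivative
           (\<integral>p. indicator {0<..} p * (p^2 * dt F t p) \<partial>lborel)) (at t)"
  proof (rule has_real_derivative_integral_dominated[where S="ball t \<delta>" and g="\<lambda>p. indicator {0<..} p * g p"])
    show "integrable lborel (\<lambda>p. indicator {0<..} p * g p)"
      using g_int by (simp add: set_integrable_def)
    show "integrable lborel (\<lambda>p. indicator {0<..} p * (p^2 * F \<tau> p))" if "\<tau> \<in> ball t \<delta>" for \<tau>
      using F_integrable_Ioi[OF ball_I[OF that]] by (simp add: set_integrable_def)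
    show "\<bar>indicator {0<..} p * (p^2 * dt F \<tau> p)\<bar> \<le> indicator {0<..} p * g p"
      if "\<tau> \<in> ball t \<delta>" for \<tau> p
      using g_bound[OF that] by (cases "p > 0") auto
  qed (use \<delta> deriv ball_I in auto)
  moreover have "(p_flux m \<sigma> t \<longlongrightarrow> 0) at_top"
    unfolding p_flux_def[abs_def] by (rule tendsto_mult_right_zero[OF no_flux_at_infinity[OF t]])
  hence "set_lebesgue_integral lborel {0<..} (\<lambda>p. p^2 * dt F t p) = 0"
    using integral_p2_dt_eq_0[OF t m_pos FP_solution[OF t] dt_integrable_Ioi[OF t]] by blast
  ultimately show ?thesis
    by (simp add: set_lebesgue_integral_def)
qed

lemma integral_p2_F_constant:
  assumes "is_interval I"
  shows "\<exists>C. \<forall>t\<in>I. 4 * pi * set_lebesgue_integral lborel {0..} (\<lambda>p. p^2 * F t p) = C"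
proof -
  have "\<exists>c. \<forall>t\<in>I. set_lebesgue_integral lborel {0<..} (\<lambda>p. p^2 * F t p) = c"
    by (rule has_field_derivative_zero_constant[OF is_interval_convex[OF assms]])
       (rule has_field_derivative_at_within[OF integral_p2_F_has_derivative_0])
  then obtain c where c: "\<forall>t\<in>I. set_lebesgue_integral lborel {0<..} (\<lambda>p. p^2 * F t p) = c" ..
  have "set_lebesgue_integral lborel {0..} (\<lambda>p. p^2 * F t p)
          = set_lebesgue_integral lborel {0<..} (\<lambda>p. p^2 * F t p)" if t: "t \<in> I" for t
  proof (rule set_integral_cong_set)
    show "set_borel_measurable lborel {0..} (\<lambda>p. p^2 * F t p)"
      using F_integrable[OF t] unfolding set_integrable_def set_borel_measurable_def
      by (rule borel_measurable_integrable)
    show "set_borel_measurable lborel {0<..} (\<lambda>p. p^2 * F t p)"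
      using F_integrable_Ioi[OF t] unfolding set_integrable_def set_borel_measurable_def
      by (rule borel_measurable_integrable)
    show "AE p in lborel. (p \<in> {0<..}) = (p \<in> {0::real..})"
      using AE_lborel_singleton[of 0] by eventually_elim auto
  qed
  with c show ?thesis by auto
qed

end

lemma invariant_iff_pmom_form:
  assumes "open I" and "\<forall>t\<in>I. a t > 0" and "Cinf_on (UmM I) f"
  shows "invariant I f \<longleftrightarrow> (\<exists>F. \<forall>z\<in>UmM I. f z = F (fst z) (pmom a (fst z) (snd (snd z))))"
  using invariant_imp_radial_on[OF assms(3)] radial_on_iff_pmom_form[OF assms(2)]
    radial_smooth.invariant[OF radial_smooth.intro[OF assms(1,3)]] by blast

lemma reduced_densityI:
  assumes "open I" and "\<forall>t\<in>I. a t > 0" and "Cinf_on I a" and "Cinf_on (UmM I) f"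
    and "\<forall>z\<in>UmM I. f z = F (fst z) (pmom a (fst z) (snd (snd z)))"
  shows "reduced_density I f a F"
proof unfold_locales
  show "radial_on I f"
    using radial_on_iff_pmom_form[OF assms(2)] assms(5) by blast
  show "(a has_real_derivative deriv a t) (at t)" if "t \<in> I" for t
    using Cinf_on_differentiable[OF assms(3) that] DERIV_deriv_iff_real_differentiable by blast
qed (use assms in auto)

lemma decaying_solution_current:
  assumes "open I" and "is_interval I" and "\<forall>t\<in>I. a t > 0" and "Cinf_on I a" and "m > 0"
    and "Cinf_on (UmM I) f" and "\<forall>z\<in>UmM I. f z = F (fst z) (pmom a (fst z) (snd (snd z)))"
    and "\<forall>t\<in>I. \<forall>p>0. FPred a m \<sigma> F t p"
    and "\<forall>t\<in>I. set_integrable lborel {0..} (\<lambda>p. p^2 * F t p)"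
    and "\<forall>K. compact K \<and> K \<subseteq> I \<longrightarrow>
           (\<exists>g. set_integrable lborel {0<..} g \<and> (\<forall>t\<in>K. \<forall>p>0. \<bar>p^2 * dt F t p\<bar> \<le> g p))"
    and "\<forall>t\<in>I. ((\<lambda>p. p^2 * sqrt (m^2 * (a t)^2 + p^2) * dp F t p) \<longlongrightarrow> 0) at_top"
  shows "(\<forall>t\<in>I. \<forall>x i. Jsp a m f i t x = 0)
    \<and> (\<forall>t\<in>I. \<forall>x. (a t)^3 * J0 a m f t x = 4 * pi * set_lebesgue_integral lborel {0..} (\<lambda>p. p^2 * F t p))
    \<and> (\<exists>C. \<forall>t\<in>I. 4 * pi * set_lebesgue_integral lborel {0..} (\<lambda>p. p^2 * F t p) = C)"
proof -
  interpret decaying_solution I f a F m \<sigma>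
    by (intro decaying_solution.intro reduced_densityI decaying_solution_axioms.intro) (use assms in auto)
  show ?thesis
    using Jsp_eq_0 J0_eq[OF _ m_pos] integral_p2_F_constant[OF assms(2)] by blast
qed

theorem mainTheorem12:
  fixes I :: "real set" and a :: "real \<Rightarrow> real" and m \<sigma> :: real
  assumes I_open: "open I" and I_int: "is_interval I" and I_ne: "I \<noteq> {}"
    and a_smooth: "Cinf_on I a" and a_pos: "\<forall>t\<in>I. a t > 0"
    and m_pos: "m > 0" and sigma_pos: "\<sigma> > 0"
  shows
   "(\<forall>f. Cinf_on (UmM I) f \<longrightarrow>
        (invariant I f \<longleftrightarrow>
          (\<exists>F. \<forall>z\<in>UmM I. f z = F (fst z) (pmom a (fst z) (snd (snd z))))))
    \<and>
    (\<forall>f F. Cinf_on (UmM I) f \<longrightarrow>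
        (\<forall>z\<in>UmM I. f z = F (fst z) (pmom a (fst z) (snd (snd z)))) \<longrightarrow>
        (\<forall>z\<in>UmM I. snd (snd z) \<noteq> 0 \<longrightarrow>
            (FP a m \<sigma> f z = 0 \<longleftrightarrow> FPred a m \<sigma> F (fst z) (pmom a (fst z) (snd (snd z))))))
    \<and>
    (\<forall>f F. Cinf_on (UmM I) f \<longrightarrow>
        (\<forall>z\<in>UmM I. f z = F (fst z) (pmom a (fst z) (snd (snd z)))) \<longrightarrow>
        (\<forall>t\<in>I. \<forall>p>0. FPred a m \<sigma> F t p) \<longrightarrow>
        \<comment> \<open>the integrals converge\<close>
        (\<forall>t\<in>I. \<forall>x. integrable lborel (\<lambda>v::real^3. f (t, x, v))) \<longrightarrow>
        (\<forall>t\<in>I. set_integrable lborel {0..} (\<lambda>p. p^2 * F t p)) \<longrightarrow>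
        \<comment> \<open>differentiation under the integral sign (locally uniform integrable majorant)\<close>
        (\<forall>K. compact K \<and> K \<subseteq> I \<longrightarrow>
            (\<exists>g. set_integrable lborel {0<..} g \<and>
                 (\<forall>t\<in>K. \<forall>p>0. \<bar>p^2 * dt F t p\<bar> \<le> g p))) \<longrightarrow>
        \<comment> \<open>no boundary term at infinity in the integration by parts\<close>
        (\<forall>t\<in>I. ((\<lambda>p. p^2 * sqrt (m^2 * (a t)^2 + p^2) * dp F t p) \<longlongrightarrow> 0) at_top) \<longrightarrow>
        (\<forall>t\<in>I. \<forall>x i. Jsp a m f i t x = 0) \<and>
        (\<forall>t\<in>I. \<forall>x. (a t)^3 * J0 a m f t x
             = 4 * pi * set_lebesgue_integral lborel {0..} (\<lambda>p. p^2 * F t p)) \<and>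
        (\<exists>C. \<forall>t\<in>I. 4 * pi * set_lebesgue_integral lborel {0..} (\<lambda>p. p^2 * F t p) = C))"
  apply (intro conjI)
  subgoal by (intro allI impI) (rule invariant_iff_pmom_form[OF I_open a_pos])
  subgoal by (intro allI impI ballI)
      (rule reduced_density.FP_eq_0_iff[OF reduced_densityI[OF I_open a_pos a_smooth] _ _ m_pos])
  subgoal by (intro allI impI) (rule decaying_solution_current[OF I_open I_int a_pos a_smooth m_pos])
  done

end
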